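(* Let $\gamma$ be a Jordan curve in $\mathbb{R}^2$ and let $x\in\gamma$. Suppose there exists an open disk $D$ of radius $1$ with $x\in\partial D$ such that (1) there exists $\varepsilon>0$ with $B(x,\varepsilon)\cap\operatorname{Int}\gamma\subset D$, and (2) for every $\eta>0$ we have $\gamma\cap B(x,\eta)\cap D\neq\emptyset$. Then $\gamma$ does not have bounded convex curvature.
   Context: For a Jordan curve $\gamma$, $\operatorname{Int}\gamma$ denotes the bounded component of $\mathbb{R}^2\setminus\gamma$. $B(x,\varepsilon)$ is the open disk of center $x$ and radius $\varepsilon$. A Jordan curve $\gamma$ has bounded convex curvature if for every point $x\in\gamma$ there exist an open disk $U_x$ of radius $1$ and $\varepsilon_x>0$ such that $x\in\partial U_x$ and $B(x,\varepsilon_x)\cap U_x\subset\operatorname{Int}\gamma$. *)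

theory Defs
  imports "HOL-Analysis.Analysis"
begin

text \<open>The plane is modelled as the complex numbers (as in the library's Jordan curve theorem).
A Jordan curve is the image of a simple closed path.\<close>

definition jordan_curve :: "complex set \<Rightarrow> bool" where
  "jordan_curve \<gamma> \<longleftrightarrow>
     (\<exists>g. simple_path g \<and> pathfinish g = pathstart g \<and> \<gamma> = path_image g)"

definition Int_curve :: "complex set \<Rightarrow> complex set" where
  "Int_curve \<gamma> = inside \<gamma>"

definition bounded_convex_curvature :: "complex set \<Rightarrow> bool" where
  "bounded_convex_curvature \<gamma> \<longleftrightarrow>
     (\<forall>x\<in>\<gamma>. \<exists>c \<epsilon>. \<epsilon> > 0 \<and> x \<in> frontier (ball c 1) \<and>
        ball x \<epsilon> \<inter> ball c 1 \<subseteq> Int_curve \<gamma>)"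

end

theory Submission
  imports Defs
begin

text \<open>The disk supplied by bounded convex curvature at \<open>x\<close> lies, near \<open>x\<close>, inside
  \<open>Int \<gamma>\<close> and hence inside \<open>D\<close>. But if one unit disk is locally contained in another and
  both have \<open>x\<close> on their boundary, they coincide. So \<open>D\<close> itself lies locally in
  \<open>Int \<gamma>\<close>, which is impossible since \<open>\<gamma>\<close> meets \<open>D\<close> arbitrarily close to \<open>x\<close> and a set
  never meets its own inside.\<close>

lemma dist_shift_between_spheres:
  fixes x c c' :: "'a::real_inner"
  assumes "dist x c = \<rho>" "dist x c' = \<rho>"
  shows "(dist (x + t *\<^sub>R (c' - c)) c')\<^sup>2 = \<rho>\<^sup>2 - t * (1 - t) * (dist c c')\<^sup>2"
    and "(dist (x + t *\<^sub>R (c' - c)) c)\<^sup>2 = \<rho>\<^sup>2 + t * (1 + t) * (dist c c')\<^sup>2"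
proof -
  define u where "u = x - c'"
  define v where "v = c' - c"
  have uu: "u \<bullet> u = \<rho>\<^sup>2" and "(u + v) \<bullet> (u + v) = \<rho>\<^sup>2"
    using assms by (simp_all add: u_def v_def dist_norm dot_square_norm)
  then have uv: "u \<bullet> v = - (v \<bullet> v) / 2"
    by (simp add: inner_add inner_commute)
  have along_v: "(norm (u + s *\<^sub>R v))\<^sup>2 = \<rho>\<^sup>2 + (s\<^sup>2 - s) * (dist c c')\<^sup>2" for s
  proof -
    have "(norm (u + s *\<^sub>R v))\<^sup>2 = u \<bullet> u + 2 * s * (u \<bullet> v) + s\<^sup>2 * (v \<bullet> v)"
      unfolding power2_norm_eq_inner
      by (simp add: inner_add_left inner_add_right inner_commute[of v u] power2_eq_square ring_distribs)
    moreover have "(dist c c')\<^sup>2 = v \<bullet> v"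
      by (simp add: v_def dist_norm dot_square_norm norm_minus_commute)
    ultimately show ?thesis
      using uu uv by (simp add: algebra_simps)
  qed
  have shift: "dist (x + t *\<^sub>R (c' - c)) c' = norm (u + t *\<^sub>R v)"
    "dist (x + t *\<^sub>R (c' - c)) c = norm (u + (1 + t) *\<^sub>R v)"
    by (simp_all add: dist_norm u_def v_def algebra_simps)
  show "(dist (x + t *\<^sub>R (c' - c)) c')\<^sup>2 = \<rho>\<^sup>2 - t * (1 - t) * (dist c c')\<^sup>2"
    and "(dist (x + t *\<^sub>R (c' - c)) c)\<^sup>2 = \<rho>\<^sup>2 + t * (1 + t) * (dist c c')\<^sup>2"
    unfolding shift using along_v[of t] along_v[of "1 + t"]
    by (simp_all add: power2_eq_square algebra_simps)
qed

lemma ball_locally_subset_ball_imp_same_centre: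
  fixes x c c' :: "'a::real_inner"
  assumes "dist x c = \<rho>" "dist x c' = \<rho>" "r > 0"
    and sub: "ball x r \<inter> ball c' \<rho> \<subseteq> ball c \<rho>"
  shows "c' = c"
proof (rule ccontr)
  assume "c' \<noteq> c"
  then have d: "dist c c' > 0" by simp
  define t where "t = min (1/2) (r / (2 * dist c c'))"
  have t: "0 < t" "t < 1" using \<open>r > 0\<close> d by (simp_all add: t_def)
  define z where "z = x + t *\<^sub>R (c' - c)"
  have "dist x z = t * dist c c'"
    by (simp add: z_def dist_norm norm_minus_commute t(1) less_imp_le)
  also have "\<dots> \<le> r / (2 * dist c c') * dist c c'"
    by (intro mult_right_mono) (simp_all add: t_def)
  also have "\<dots> = r / 2"
    using d by simp
  finally have "z \<in> ball x r" using \<open>r > 0\<close> by simp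
  moreover have "(dist z c')\<^sup>2 < \<rho>\<^sup>2" "\<rho>\<^sup>2 \<le> (dist z c)\<^sup>2"
    using dist_shift_between_spheres[OF assms(1,2), of t] t d
    by (simp_all add: z_def)
  then have "dist z c' < \<rho>" "\<rho> \<le> dist z c"
    using assms(1) by (auto intro: power2_less_imp_less power2_le_imp_le)
  then have "z \<in> ball c' \<rho>" "z \<notin> ball c \<rho>"
    by (simp_all add: dist_commute)
  ultimately show False using sub by blast
qed

theorem lemma1:
  fixes \<gamma> :: "complex set" and x c :: complex
  assumes "jordan_curve \<gamma>"
    and "x \<in> \<gamma>"
    and "x \<in> frontier (ball c 1)"
    and "\<exists>\<epsilon>>0. ball x \<epsilon> \<inter> Int_curve \<gamma> \<subseteq> ball c 1"
    and "\<forall>\<eta>>0. \<gamma> \<inter> ball x \<eta> \<inter> ball c 1 \<noteq> {}"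
  shows "\<not> bounded_convex_curvature \<gamma>"
proof
  assume "bounded_convex_curvature \<gamma>"
  then obtain c' e where e: "e > 0" "x \<in> frontier (ball c' 1)"
      and interior_disk: "ball x e \<inter> ball c' 1 \<subseteq> Int_curve \<gamma>"
    using assms(2) unfolding bounded_convex_curvature_def by blast
  obtain d where d: "d > 0" "ball x d \<inter> Int_curve \<gamma> \<subseteq> ball c 1"
    using assms(4) by blast
  have "ball x (min d e) \<inter> ball c' 1 \<subseteq> ball c 1"
    using interior_disk d(2) by fastforce
  moreover have "dist x c = 1" "dist x c' = 1"
    using assms(3) e(2) by (simp_all add: frontier_ball dist_commute)
  ultimately have "c' = c"
    using ball_locally_subset_ball_imp_same_centre[of x c 1 c' "min d e"] d(1) e(1) by simp
  moreover obtain y where "y \<in> \<gamma>" "y \<in> ball x e" "y \<in> ball c 1"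
    using assms(5) e(1) by blast
  ultimately show False
    using interior_disk inside_no_overlap unfolding Int_curve_def by blast
qed

end
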